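(* Let $(\Omega,\mathcal{F})$ be a measurable space, $\mathcal{P}$ a nonempty set of probability measures on it, $\hat{\mathbb{E}}[Z]=\sup_{P\in\mathcal{P}}E_P[Z]$, and let $X,Y$ be random variables with $\hat{\mathbb{E}}[X^2]+\hat{\mathbb{E}}[Y^2]<\infty$. Let $\rho_X=\frac12(\overline{\mu}_X+\underline{\mu}_X)$, $\rho_Y=\frac12(\overline{\mu}_Y+\underline{\mu}_Y)$, $\Delta_X=\overline{\mu}_X-\underline{\mu}_X$, $\Delta_Y=\overline{\mu}_Y-\underline{\mu}_Y$. Then: (1) If $(\mu_1,\mu_2)=(\overline{\mu}_X,\overline{\mu}_Y)$ or $(\mu_1,\mu_2)=(\underline{\mu}_X,\underline{\mu}_Y)$, then $\overline{C}(X,Y)\le\hat{\mathbb{E}}[(X-\mu_1)(Y-\mu_2)]\le\overline{C}(X,Y)+\Delta_X\Delta_Y$ and $\underline{C}(X,Y)\le-\hat{\mathbb{E}}[-(X-\mu_1)(Y-\mu_2)]\le\underline{C}(X,Y)+\Delta_X\Delta_Y$. If $(\mu_1,\mu_2)=(\underline{\mu}_X,\overline{\mu}_Y)$ or $(\mu_1,\mu_2)=(\overline{\mu}_X,\underline{\mu}_Y)$, then $\overline{C}(X,Y)-\Delta_X\Delta_Y\le\hat{\mathbb{E}}[(X-\mu_1)(Y-\mu_2)]\le\overline{C}(X,Y)+\Delta_X\Delta_Y$ and $\underline{C}(X,Y)-\Delta_X\Delta_Y\le-\hat{\mathbb{E}}[-(X-\mu_1)(Y-\mu_2)]\le\underline{C}(X,Y)+\Delta_X\Delta_Y$.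 (2) Let $\overline{M}(X,Y)=\max\{\underline{\mu}_X\underline{\mu}_Y,\overline{\mu}_X\underline{\mu}_Y,\underline{\mu}_X\overline{\mu}_Y,\overline{\mu}_X\overline{\mu}_Y\}$ and $\underline{M}(X,Y)=\min\{\underline{\mu}_X\underline{\mu}_Y,\overline{\mu}_X\underline{\mu}_Y,\underline{\mu}_X\overline{\mu}_Y,\overline{\mu}_X\overline{\mu}_Y\}$. Then $\overline{C}(X,Y)+\underline{M}(X,Y)\le\hat{\mathbb{E}}[XY]\le\overline{C}(X,Y)+\overline{M}(X,Y)$ and $\underline{C}(X,Y)+\underline{M}(X,Y)\le-\hat{\mathbb{E}}[-XY]\le\underline{C}(X,Y)+\overline{M}(X,Y)$. (3) $\hat{\mathbb{E}}[(X-\rho_X)(Y-\rho_Y)]-\frac14\Delta_X\Delta_Y\le\overline{C}(X,Y)\le\hat{\mathbb{E}}[(X-\rho_X)(Y-\rho_Y)]+\frac14\Delta_X\Delta_Y$ and $-\hat{\mathbb{E}}[-(X-\rho_X)(Y-\rho_Y)]-\frac14\Delta_X\Delta_Y\le\underline{C}(X,Y)\le-\hat{\mathbb{E}}[-(X-\rho_X)(Y-\rho_Y)]+\frac14\Delta_X\Delta_Y$. (4) $0\le\overline{C}(X,Y)-\underline{C}(X,Y)\le\hat{\mathbb{E}}[(X-\rho_X)(Y-\rho_Y)]+\hat{\mathbb{E}}[-(X-\rho_X)(Y-\rho_Y)]+\frac12\Delta_X\Delta_Y$.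
   Context: For a random variable $W$ with $\hat{\mathbb{E}}[W^2]<\infty$: $\overline{\mu}_W=\hat{\mathbb{E}}[W]$, $\underline{\mu}_W=-\hat{\mathbb{E}}[-W]$, $M_W=[\underline{\mu}_W,\overline{\mu}_W]$. Upper covariance $\overline{C}(X,Y)=\max_{\mu_2\in M_Y}\min_{\mu_1\in M_X}\hat{\mathbb{E}}[(X-\mu_1)(Y-\mu_2)]$; lower covariance $\underline{C}(X,Y)=\min_{\mu_2\in M_Y}\max_{\mu_1\in M_X}\left(-\hat{\mathbb{E}}[-(X-\mu_1)(Y-\mu_2)]\right)$. *)

theory Defs
  imports "HOL-Probability.Probability"
begin

definition sublin_exp :: "'a measure set \<Rightarrow> ('a \<Rightarrow> real) \<Rightarrow> real" where
  "sublin_exp Ps Z = (SUP P\<in>Ps. integral\<^sup>L P Z)"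

definition mu_up :: "'a measure set \<Rightarrow> ('a \<Rightarrow> real) \<Rightarrow> real" where
  "mu_up Ps W = sublin_exp Ps W"

definition mu_lo :: "'a measure set \<Rightarrow> ('a \<Rightarrow> real) \<Rightarrow> real" where
  "mu_lo Ps W = - sublin_exp Ps (\<lambda>w. - W w)"

definition upper_cov :: "'a measure set \<Rightarrow> ('a \<Rightarrow> real) \<Rightarrow> ('a \<Rightarrow> real) \<Rightarrow> real" where
  "upper_cov Ps X Y =
     (SUP m2\<in>{mu_lo Ps Y..mu_up Ps Y}. INF m1\<in>{mu_lo Ps X..mu_up Ps X}.
        sublin_exp Ps (\<lambda>w. (X w - m1) * (Y w - m2)))"

definition lower_cov :: "'a measure set \<Rightarrow> ('a \<Rightarrow> real) \<Rightarrow> ('a \<Rightarrow> real) \<Rightarrow> real" where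
  "lower_cov Ps X Y =
     (INF m2\<in>{mu_lo Ps Y..mu_up Ps Y}. SUP m1\<in>{mu_lo Ps X..mu_up Ps X}.
        - sublin_exp Ps (\<lambda>w. - ((X w - m1) * (Y w - m2))))"

end

(* For every P the centred expectation splits as
     E_P[(X - m1) (Y - m2)] = Cov_P(X, Y) + (E_P X - m1) (E_P Y - m2),
   and the means E_P X, E_P Y range over the intervals M_X, M_Y.  Hence comparing
   sup_P E_P[(X - m1) (Y - m2)] for two centres inside the box M_X x M_Y reduces to comparing
   products of deviations inside that box, which differ by at most Delta_X Delta_Y
   (by Delta_X Delta_Y / 4 when one centre is the midpoint).  Feeding these comparisons into
   the max-min defining the upper covariance gives all bounds for it; the bounds for the lower
   covariance follow from the duality lower_cov(X, Y) = - upper_cov(-X, Y). *)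

theory Submission
  imports Defs
begin

lemma mult_bounded_by_corners:
  fixes s t p q r v :: real
  assumes "s \<in> {p..q}" "t \<in> {r..v}"
  shows "Min {p * r, q * r, p * v, q * v} \<le> s * t \<and> s * t \<le> Max {p * r, q * r, p * v, q * v}"
proof -
  have in_t: "min (s * r) (s * v) \<le> s * t \<and> s * t \<le> max (s * r) (s * v)"
    using assms by (cases "0 \<le> s") (auto simp: min_def max_def mult_left_mono mult_left_mono_neg)
  have in_s: "min (p * y) (q * y) \<le> s * y \<and> s * y \<le> max (p * y) (q * y)" for y
    using assms by (cases "0 \<le> y") (auto simp: min_def max_def mult_right_mono mult_right_mono_neg)
  have "min (min (p * r) (q * r)) (min (p * v) (q * v)) \<le> s * t"
    using in_t in_s[of r] in_s[of v] by linarith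
  moreover have "s * t \<le> max (max (p * r) (q * r)) (max (p * v) (q * v))"
    using in_t in_s[of r] in_s[of v] by linarith
  ultimately show ?thesis by (simp add: min.assoc max.assoc)
qed

lemma mult_diff_le_box_area:
  fixes s t s' t' p q r v :: real
  assumes "p \<le> 0" "0 \<le> q" "r \<le> 0" "0 \<le> v"
    and "s \<in> {p..q}" "s' \<in> {p..q}" "t \<in> {r..v}" "t' \<in> {r..v}"
  shows "s * t \<le> s' * t' + (q - p) * (v - r)"
proof -
  have upper: "s * t \<le> max (p * r) (q * v)"
  proof (cases "0 \<le> s")
    case True
    with assms have "s * t \<le> s * v" "s * v \<le> q * v" by (auto intro: mult_left_mono mult_right_mono)
    then show ?thesis by linarith
  next
    case False
    with assms have "s * t \<le> s * r" "s * r \<le> p * r" by (auto intro: mult_left_mono_neg mult_right_mono_neg)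
    then show ?thesis by linarith
  qed
  have lower: "min (q * r) (p * v) \<le> s' * t'"
  proof (cases "0 \<le> s'")
    case True
    with assms have "s' * r \<le> s' * t'" "q * r \<le> s' * r" by (auto intro: mult_left_mono mult_right_mono_neg)
    then show ?thesis by linarith
  next
    case False
    with assms have "s' * v \<le> s' * t'" "p * v \<le> s' * v" by (auto intro: mult_left_mono_neg mult_right_mono)
    then show ?thesis by linarith
  qed
  have "0 \<le> p * r" "p * v \<le> 0" "q * r \<le> 0" "0 \<le> q * v"
    using assms(1-4) by (simp_all add: mult_nonpos_nonpos mult_nonpos_nonneg mult_nonneg_nonpos)
  moreover have "(q - p) * (v - r) = q * v - q * r - p * v + p * r" by (simp add: algebra_simps)
  ultimately show ?thesis using upper lower by linarith
qed

lemma abs_mult_le_half_widths: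
  fixes s t d1 d2 :: real
  assumes "\<bar>s\<bar> \<le> d1 / 2" and "\<bar>t\<bar> \<le> d2 / 2"
  shows "\<bar>s * t\<bar> \<le> d1 * d2 / 4"
proof -
  have "0 \<le> d1 / 2" using assms(1) abs_ge_zero order.trans by blast
  from mult_mono[OF assms this abs_ge_zero] show ?thesis by (simp add: abs_mult)
qed

lemma abs_diff_midpoint_le: "x \<in> {l..u} \<Longrightarrow> \<bar>x - (u + l) / 2\<bar> \<le> (u - l) / (2::real)"
  by (auto simp: abs_le_iff field_simps)

lemma abs_le_one_plus_square: "\<bar>z\<bar> \<le> 1 + (z::real)\<^sup>2"
  using zero_le_power2[of "\<bar>z\<bar> - 1"] unfolding power2_diff power2_abs by simp

lemma abs_mult_le_sum_squares: "\<bar>x * y\<bar> \<le> x\<^sup>2 + (y::real)\<^sup>2"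
  using sum_squares_bound[of "\<bar>x\<bar>" "\<bar>y\<bar>"] abs_ge_zero[of "x * y"]
  unfolding abs_mult power2_abs by linarith

lemma SUP_uminus_real: "(SUP x\<in>A. - f x) = - (INF x\<in>A. f x :: real)"
  by (simp add: Inf_real_def image_image)

lemma INF_uminus_real: "(INF x\<in>A. - f x) = - (SUP x\<in>A. f x :: real)"
  by (simp add: Inf_real_def image_image)

lemma cSUP_cINF_le:
  fixes f :: "'a \<Rightarrow> 'b \<Rightarrow> real"
  assumes "B \<noteq> {}" and bound: "\<And>x y. x \<in> A \<Longrightarrow> y \<in> B \<Longrightarrow> \<bar>f x y\<bar> \<le> K"
    and "\<And>y. y \<in> B \<Longrightarrow> \<exists>x\<in>A. f x y \<le> t"
  shows "(SUP y\<in>B. INF x\<in>A. f x y) \<le> t"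
proof (rule cSUP_least[OF \<open>B \<noteq> {}\<close>])
  fix y assume y: "y \<in> B"
  then obtain x where "x \<in> A" "f x y \<le> t" using assms(3) by blast
  moreover have "bdd_below ((\<lambda>x. f x y) ` A)"
    using bound y by (intro bdd_belowI2[of _ "- K"]) (force simp: abs_le_iff)
  ultimately show "(INF x\<in>A. f x y) \<le> t" by (intro cINF_lower2)
qed

lemma le_cSUP_cINF:
  fixes f :: "'a \<Rightarrow> 'b \<Rightarrow> real"
  assumes "A \<noteq> {}" and bound: "\<And>x y. x \<in> A \<Longrightarrow> y \<in> B \<Longrightarrow> \<bar>f x y\<bar> \<le> K"
    and "y \<in> B" and "\<And>x. x \<in> A \<Longrightarrow> t \<le> f x y"
  shows "t \<le> (SUP y\<in>B. INF x\<in>A. f x y)"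
proof (rule cSUP_upper2[OF _ \<open>y \<in> B\<close>])
  obtain x0 where x0: "x0 \<in> A" using \<open>A \<noteq> {}\<close> by blast
  have "(INF x\<in>A. f x y') \<le> K" if y': "y' \<in> B" for y'
  proof -
    have "bdd_below ((\<lambda>x. f x y') ` A)"
      using bound y' by (intro bdd_belowI2[of _ "- K"]) (force simp: abs_le_iff)
    then have "(INF x\<in>A. f x y') \<le> f x0 y'" using x0 by (rule cINF_lower)
    also have "\<dots> \<le> K" using bound[OF x0 y'] by simp
    finally show ?thesis .
  qed
  then show "bdd_above ((\<lambda>y. INF x\<in>A. f x y) ` B)" by (intro bdd_aboveI2)
  show "t \<le> (INF x\<in>A. f x y)" using assms(1,4) by (rule cINF_greatest)
qed

lemma integrable_abs_integral_le:
  fixes Z D :: "'a \<Rightarrow> real"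
  assumes D: "integrable P D" and Z: "Z \<in> borel_measurable P" and bound: "\<And>w. \<bar>Z w\<bar> \<le> D w"
  shows "integrable P Z" and "\<bar>integral\<^sup>L P Z\<bar> \<le> integral\<^sup>L P D"
proof -
  show iZ: "integrable P Z"
    using bound by (intro Bochner_Integration.integrable_bound[OF D Z] AE_I2)
      (auto intro: order.trans[OF _ abs_ge_self])
  have "\<bar>integral\<^sup>L P Z\<bar> \<le> (\<integral>w. \<bar>Z w\<bar> \<partial>P)" by (rule integral_abs_bound)
  also have "\<dots> \<le> integral\<^sup>L P D" using bound by (intro integral_mono[OF integrable_abs[OF iZ] D])
  finally show "\<bar>integral\<^sup>L P Z\<bar> \<le> integral\<^sup>L P D" .
qed

lemma (in prob_space) integral_centered_product:
  fixes X Y :: "'a \<Rightarrow> real"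
  assumes "integrable M X" "integrable M Y" "integrable M (\<lambda>w. X w * Y w)"
  shows "(\<integral>w. (X w - m1) * (Y w - m2) \<partial>M)
       = ((\<integral>w. X w * Y w \<partial>M) - integral\<^sup>L M X * integral\<^sup>L M Y)
         + (integral\<^sup>L M X - m1) * (integral\<^sup>L M Y - m2)"
proof -
  have "(\<lambda>w. (X w - m1) * (Y w - m2)) = (\<lambda>w. X w * Y w - m2 * X w - m1 * Y w + m1 * m2)"
    by (intro ext) (simp add: algebra_simps)
  then show ?thesis using assms by (simp add: prob_space algebra_simps)
qed

lemma sublin_exp_le_add:
  assumes "Ps \<noteq> {}" and "bdd_above ((\<lambda>P. integral\<^sup>L P W) ` Ps)"
    and "\<And>P. P \<in> Ps \<Longrightarrow> integral\<^sup>L P Z \<le> integral\<^sup>L P W + \<delta>"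
  shows "sublin_exp Ps Z \<le> sublin_exp Ps W + \<delta>"
  unfolding sublin_exp_def
proof (rule cSUP_least[OF \<open>Ps \<noteq> {}\<close>])
  fix P assume "P \<in> Ps"
  with assms(2) have "integral\<^sup>L P W \<le> (SUP P\<in>Ps. integral\<^sup>L P W)" by (intro cSUP_upper)
  with assms(3)[OF \<open>P \<in> Ps\<close>] show "integral\<^sup>L P Z \<le> (SUP P\<in>Ps. integral\<^sup>L P W) + \<delta>"
    by linarith
qed

lemma integral_le_sublin_exp:
  "bdd_above ((\<lambda>P. integral\<^sup>L P Z) ` Ps) \<Longrightarrow> P \<in> Ps \<Longrightarrow> integral\<^sup>L P Z \<le> sublin_exp Ps Z"
  unfolding sublin_exp_def by (rule cSUP_upper)

lemma mu_lo_eq_INF: "mu_lo Ps X = (INF P\<in>Ps. integral\<^sup>L P X)"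
  by (simp add: mu_lo_def sublin_exp_def SUP_uminus_real)

lemma mu_up_uminus: "mu_up Ps (\<lambda>w. - X w) = - mu_lo Ps X"
  by (simp add: mu_up_def mu_lo_def)

lemma mu_lo_uminus: "mu_lo Ps (\<lambda>w. - X w) = - mu_up Ps X"
  by (simp add: mu_up_def mu_lo_def)

lemma lower_cov_eq_neg_upper_cov: "lower_cov Ps X Y = - upper_cov Ps (\<lambda>w. - X w) Y"
  unfolding lower_cov_def upper_cov_def mu_up_uminus mu_lo_uminus SUP_uminus_real INF_uminus_real
  by (simp flip: image_uminus_atLeastAtMost add: image_image algebra_simps)

lemma sublin_exp_uminus_centered:
  "sublin_exp Ps (\<lambda>w. (- X w - - m1) * (Y w - m2)) = sublin_exp Ps (\<lambda>w. - ((X w - m1) * (Y w - m2)))"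
  by (simp add: algebra_simps)

locale sublinear_expectation_space =
  fixes M :: "'a measure" and Ps :: "'a measure set"
  assumes Ps_nonempty: "Ps \<noteq> {}"
    and prob_space_Ps: "P \<in> Ps \<Longrightarrow> prob_space P"
    and sets_Ps: "P \<in> Ps \<Longrightarrow> sets P = sets M"
begin

definition finite_second_moment :: "('a \<Rightarrow> real) \<Rightarrow> bool" where
  "finite_second_moment X \<longleftrightarrow>
     X \<in> borel_measurable M \<and> (SUP P\<in>Ps. \<integral>\<^sup>+ w. ennreal ((X w)\<^sup>2) \<partial>P) < \<infinity>"

lemma finite_second_moment_uminus:
  "finite_second_moment X \<Longrightarrow> finite_second_moment (\<lambda>w. - X w)"
  by (simp add: finite_second_moment_def)

lemma borel_measurable_Ps: "X \<in> borel_measurable M \<Longrightarrow> P \<in> Ps \<Longrightarrow> X \<in> borel_measurable P"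
  using measurable_cong_sets[OF sets_Ps refl] by blast

lemma second_moment_bound:
  assumes X: "finite_second_moment X"
  obtains K where "\<And>P. P \<in> Ps \<Longrightarrow> integrable P (\<lambda>w. (X w)\<^sup>2) \<and> (\<integral>w. (X w)\<^sup>2 \<partial>P) \<le> K"
proof -
  define S where "S = (SUP P\<in>Ps. \<integral>\<^sup>+ w. ennreal ((X w)\<^sup>2) \<partial>P)"
  have S_finite: "S < \<infinity>" using X by (simp add: finite_second_moment_def S_def)
  have "integrable P (\<lambda>w. (X w)\<^sup>2) \<and> (\<integral>w. (X w)\<^sup>2 \<partial>P) \<le> enn2real S" if P: "P \<in> Ps" for P
  proof
    have "X \<in> borel_measurable P"
      using X by (intro borel_measurable_Ps[OF _ P]) (simp add: finite_second_moment_def)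
    then have meas: "(\<lambda>w. (X w)\<^sup>2) \<in> borel_measurable P" by measurable
    have le_S: "(\<integral>\<^sup>+ w. ennreal ((X w)\<^sup>2) \<partial>P) \<le> S" unfolding S_def using P by (rule SUP_upper)
    show "integrable P (\<lambda>w. (X w)\<^sup>2)"
      using le_S S_finite by (intro integrableI_nonneg[OF meas]) auto
    have "(\<integral>w. (X w)\<^sup>2 \<partial>P) = enn2real (\<integral>\<^sup>+ w. ennreal ((X w)\<^sup>2) \<partial>P)"
      by (rule integral_eq_nn_integral[OF meas]) simp
    also have "\<dots> \<le> enn2real S" using le_S S_finite by (intro enn2real_mono) simp_all
    finally show "(\<integral>w. (X w)\<^sup>2 \<partial>P) \<le> enn2real S" .
  qed
  then show thesis by (rule that)
qed

lemma integrable_mean_bound: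
  assumes X: "finite_second_moment X"
  obtains K where "\<And>P. P \<in> Ps \<Longrightarrow> integrable P X \<and> \<bar>integral\<^sup>L P X\<bar> \<le> K"
proof -
  obtain K where K: "\<And>P. P \<in> Ps \<Longrightarrow> integrable P (\<lambda>w. (X w)\<^sup>2) \<and> (\<integral>w. (X w)\<^sup>2 \<partial>P) \<le> K"
    using second_moment_bound[OF X] by blast
  have "integrable P X \<and> \<bar>integral\<^sup>L P X\<bar> \<le> 1 + K" if P: "P \<in> Ps" for P
  proof -
    interpret prob_space P by (rule prob_space_Ps[OF P])
    have XP: "X \<in> borel_measurable P"
      using X by (intro borel_measurable_Ps[OF _ P]) (simp add: finite_second_moment_def)
    have dom: "integrable P (\<lambda>w. 1 + (X w)\<^sup>2)" using K[OF P] by simp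
    have "\<bar>integral\<^sup>L P X\<bar> \<le> (\<integral>w. 1 + (X w)\<^sup>2 \<partial>P)"
      by (rule integrable_abs_integral_le(2)[OF dom XP abs_le_one_plus_square])
    then show ?thesis
      using K[OF P] integrable_abs_integral_le(1)[OF dom XP abs_le_one_plus_square]
      by (simp add: prob_space)
  qed
  then show thesis by (rule that)
qed

lemma integrable_product_mean_bound:
  assumes X: "finite_second_moment X" and Y: "finite_second_moment Y"
  obtains K where "\<And>P. P \<in> Ps \<Longrightarrow> integrable P (\<lambda>w. X w * Y w) \<and> \<bar>\<integral>w. X w * Y w \<partial>P\<bar> \<le> K"
proof -
  obtain KX where KX: "\<And>P. P \<in> Ps \<Longrightarrow> integrable P (\<lambda>w. (X w)\<^sup>2) \<and> (\<integral>w. (X w)\<^sup>2 \<partial>P) \<le> KX"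
    using second_moment_bound[OF X] by blast
  obtain KY where KY: "\<And>P. P \<in> Ps \<Longrightarrow> integrable P (\<lambda>w. (Y w)\<^sup>2) \<and> (\<integral>w. (Y w)\<^sup>2 \<partial>P) \<le> KY"
    using second_moment_bound[OF Y] by blast
  have "integrable P (\<lambda>w. X w * Y w) \<and> \<bar>\<integral>w. X w * Y w \<partial>P\<bar> \<le> KX + KY" if P: "P \<in> Ps" for P
  proof -
    have "X \<in> borel_measurable P" "Y \<in> borel_measurable P"
      using X Y by (auto intro: borel_measurable_Ps[OF _ P] simp: finite_second_moment_def)
    then have XY: "(\<lambda>w. X w * Y w) \<in> borel_measurable P" by measurable
    have dom: "integrable P (\<lambda>w. (X w)\<^sup>2 + (Y w)\<^sup>2)" using KX[OF P] KY[OF P] by simp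
    have "\<bar>\<integral>w. X w * Y w \<partial>P\<bar> \<le> (\<integral>w. (X w)\<^sup>2 + (Y w)\<^sup>2 \<partial>P)"
      by (rule integrable_abs_integral_le(2)[OF dom XY abs_mult_le_sum_squares])
    then show ?thesis
      using KX[OF P] KY[OF P] integrable_abs_integral_le(1)[OF dom XY abs_mult_le_sum_squares]
      by simp
  qed
  then show thesis by (rule that)
qed

lemma integral_mem_mu_interval:
  assumes X: "finite_second_moment X" and P: "P \<in> Ps"
  shows "integral\<^sup>L P X \<in> {mu_lo Ps X..mu_up Ps X}"
proof -
  obtain K where K: "\<And>P. P \<in> Ps \<Longrightarrow> integrable P X \<and> \<bar>integral\<^sup>L P X\<bar> \<le> K"
    using integrable_mean_bound[OF X] by blast
  have "- K \<le> integral\<^sup>L P X \<and> integral\<^sup>L P X \<le> K" if "P \<in> Ps" for P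
    using K[OF that] by (auto simp: abs_le_iff)
  then have "bdd_above ((\<lambda>P. integral\<^sup>L P X) ` Ps)" "bdd_below ((\<lambda>P. integral\<^sup>L P X) ` Ps)"
    by (auto intro: bdd_aboveI2[of _ _ K] bdd_belowI2[of _ "- K"])
  then show ?thesis
    using P unfolding mu_up_def sublin_exp_def mu_lo_eq_INF atLeastAtMost_iff
    by (intro conjI cINF_lower cSUP_upper)
qed

lemma mu_lo_le_mu_up: "finite_second_moment X \<Longrightarrow> mu_lo Ps X \<le> mu_up Ps X"
  using integral_mem_mu_interval Ps_nonempty by fastforce

context
  fixes X Y :: "'a \<Rightarrow> real"
  assumes X: "finite_second_moment X" and Y: "finite_second_moment Y"
begin

lemma integral_centered_product_Ps:
  assumes P: "P \<in> Ps"
  shows "(\<integral>w. (X w - m1) * (Y w - m2) \<partial>P)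
       = ((\<integral>w. X w * Y w \<partial>P) - integral\<^sup>L P X * integral\<^sup>L P Y)
         + (integral\<^sup>L P X - m1) * (integral\<^sup>L P Y - m2)"
proof (rule prob_space.integral_centered_product[OF prob_space_Ps[OF P]])
  show "integrable P X" using integrable_mean_bound[OF X] P by metis
  show "integrable P Y" using integrable_mean_bound[OF Y] P by metis
  show "integrable P (\<lambda>w. X w * Y w)" using integrable_product_mean_bound[OF X Y] P by metis
qed

lemma bdd_above_centered_product:
  "bdd_above ((\<lambda>P. \<integral>w. (X w - m1) * (Y w - m2) \<partial>P) ` Ps)"
proof -
  obtain KX where KX: "\<And>P. P \<in> Ps \<Longrightarrow> integrable P X \<and> \<bar>integral\<^sup>L P X\<bar> \<le> KX"
    using integrable_mean_bound[OF X] by blast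
  obtain KY where KY: "\<And>P. P \<in> Ps \<Longrightarrow> integrable P Y \<and> \<bar>integral\<^sup>L P Y\<bar> \<le> KY"
    using integrable_mean_bound[OF Y] by blast
  obtain KXY where KXY: "\<And>P. P \<in> Ps \<Longrightarrow>
      integrable P (\<lambda>w. X w * Y w) \<and> \<bar>\<integral>w. X w * Y w \<partial>P\<bar> \<le> KXY"
    using integrable_product_mean_bound[OF X Y] by blast
  have "(\<integral>w. (X w - m1) * (Y w - m2) \<partial>P) \<le> KXY + KX * KY + (KX + \<bar>m1\<bar>) * (KY + \<bar>m2\<bar>)"
    if P: "P \<in> Ps" for P
  proof -
    have "\<bar>integral\<^sup>L P X * integral\<^sup>L P Y\<bar> \<le> KX * KY"
      unfolding abs_mult using KX[OF P] KY[OF P] by (intro mult_mono) auto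
    moreover have "\<bar>(integral\<^sup>L P X - m1) * (integral\<^sup>L P Y - m2)\<bar> \<le> (KX + \<bar>m1\<bar>) * (KY + \<bar>m2\<bar>)"
      unfolding abs_mult using KX[OF P] KY[OF P] by (intro mult_mono) auto
    ultimately show ?thesis
      using KXY[OF P] unfolding integral_centered_product_Ps[OF P] abs_le_iff by linarith
  qed
  then show ?thesis by (intro bdd_aboveI2)
qed

lemma integral_centered_le_sublin_exp:
  "P \<in> Ps \<Longrightarrow> (\<integral>w. (X w - m1) * (Y w - m2) \<partial>P) \<le> sublin_exp Ps (\<lambda>w. (X w - m1) * (Y w - m2))"
  by (rule integral_le_sublin_exp[OF bdd_above_centered_product])

lemma sublin_exp_centered_le:
  assumes "\<And>P. P \<in> Ps \<Longrightarrow> (integral\<^sup>L P X - m1) * (integral\<^sup>L P Y - m2)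
                         \<le> (integral\<^sup>L P X - m1') * (integral\<^sup>L P Y - m2') + \<delta>"
  shows "sublin_exp Ps (\<lambda>w. (X w - m1) * (Y w - m2))
       \<le> sublin_exp Ps (\<lambda>w. (X w - m1') * (Y w - m2')) + \<delta>"
  by (rule sublin_exp_le_add[OF Ps_nonempty bdd_above_centered_product])
    (use assms in \<open>simp add: integral_centered_product_Ps\<close>)

lemma sublin_exp_centered_oscillation:
  assumes "m1 \<in> {mu_lo Ps X..mu_up Ps X}" "m1' \<in> {mu_lo Ps X..mu_up Ps X}"
    and "m2 \<in> {mu_lo Ps Y..mu_up Ps Y}" "m2' \<in> {mu_lo Ps Y..mu_up Ps Y}"
  shows "sublin_exp Ps (\<lambda>w. (X w - m1) * (Y w - m2))
       \<le> sublin_exp Ps (\<lambda>w. (X w - m1') * (Y w - m2'))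
         + (mu_up Ps X - mu_lo Ps X) * (mu_up Ps Y - mu_lo Ps Y)"
proof (rule sublin_exp_centered_le)
  fix P assume P: "P \<in> Ps"
  let ?a = "integral\<^sup>L P X" and ?b = "integral\<^sup>L P Y"
  have "?a \<in> {mu_lo Ps X..mu_up Ps X}" "?b \<in> {mu_lo Ps Y..mu_up Ps Y}"
    using integral_mem_mu_interval[OF X P] integral_mem_mu_interval[OF Y P] .
  with assms have "(?a - m1) * (?b - m2) \<le> (?a - m1') * (?b - m2')
      + ((?a - mu_lo Ps X) - (?a - mu_up Ps X)) * ((?b - mu_lo Ps Y) - (?b - mu_up Ps Y))"
    by (intro mult_diff_le_box_area) auto
  then show "(?a - m1) * (?b - m2) \<le> (?a - m1') * (?b - m2')
      + (mu_up Ps X - mu_lo Ps X) * (mu_up Ps Y - mu_lo Ps Y)" by simp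
qed

lemma mu_endpoints_mem:
  "mu_lo Ps X \<in> {mu_lo Ps X..mu_up Ps X}" "mu_up Ps X \<in> {mu_lo Ps X..mu_up Ps X}"
  "mu_lo Ps Y \<in> {mu_lo Ps Y..mu_up Ps Y}" "mu_up Ps Y \<in> {mu_lo Ps Y..mu_up Ps Y}"
  using mu_lo_le_mu_up[OF X] mu_lo_le_mu_up[OF Y] by auto

lemma sublin_exp_centered_bounded:
  assumes "m1 \<in> {mu_lo Ps X..mu_up Ps X}" "m2 \<in> {mu_lo Ps Y..mu_up Ps Y}"
  shows "\<bar>sublin_exp Ps (\<lambda>w. (X w - m1) * (Y w - m2))\<bar>
       \<le> \<bar>sublin_exp Ps (\<lambda>w. (X w - mu_lo Ps X) * (Y w - mu_lo Ps Y))\<bar>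
         + (mu_up Ps X - mu_lo Ps X) * (mu_up Ps Y - mu_lo Ps Y)"
  using sublin_exp_centered_oscillation[OF assms(1) mu_endpoints_mem(1) assms(2) mu_endpoints_mem(3)]
    sublin_exp_centered_oscillation[OF mu_endpoints_mem(1) assms(1) mu_endpoints_mem(3) assms(2)]
  by linarith

lemma upper_cov_le:
  assumes "\<And>m2. m2 \<in> {mu_lo Ps Y..mu_up Ps Y} \<Longrightarrow>
      \<exists>m1\<in>{mu_lo Ps X..mu_up Ps X}. sublin_exp Ps (\<lambda>w. (X w - m1) * (Y w - m2)) \<le> t"
  shows "upper_cov Ps X Y \<le> t"
  unfolding upper_cov_def
  using mu_lo_le_mu_up[OF Y] sublin_exp_centered_bounded assms by (intro cSUP_cINF_le) auto

lemma le_upper_cov: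
  assumes "m2 \<in> {mu_lo Ps Y..mu_up Ps Y}"
    and "\<And>m1. m1 \<in> {mu_lo Ps X..mu_up Ps X} \<Longrightarrow> t \<le> sublin_exp Ps (\<lambda>w. (X w - m1) * (Y w - m2))"
  shows "t \<le> upper_cov Ps X Y"
  unfolding upper_cov_def
  using mu_lo_le_mu_up[OF X] sublin_exp_centered_bounded assms by (intro le_cSUP_cINF) auto

lemma upper_cov_le_corners:
  "upper_cov Ps X Y \<le> sublin_exp Ps (\<lambda>w. (X w - mu_up Ps X) * (Y w - mu_up Ps Y))"
  "upper_cov Ps X Y \<le> sublin_exp Ps (\<lambda>w. (X w - mu_lo Ps X) * (Y w - mu_lo Ps Y))"
proof -
  have "sublin_exp Ps (\<lambda>w. (X w - mu_up Ps X) * (Y w - m2))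
      \<le> sublin_exp Ps (\<lambda>w. (X w - mu_up Ps X) * (Y w - mu_up Ps Y)) + 0"
    if "m2 \<in> {mu_lo Ps Y..mu_up Ps Y}" for m2
    using that integral_mem_mu_interval[OF X] integral_mem_mu_interval[OF Y]
    by (intro sublin_exp_centered_le) (auto intro!: mult_left_mono_neg)
  then show "upper_cov Ps X Y \<le> sublin_exp Ps (\<lambda>w. (X w - mu_up Ps X) * (Y w - mu_up Ps Y))"
    using mu_endpoints_mem by (intro upper_cov_le) force
  have "sublin_exp Ps (\<lambda>w. (X w - mu_lo Ps X) * (Y w - m2))
      \<le> sublin_exp Ps (\<lambda>w. (X w - mu_lo Ps X) * (Y w - mu_lo Ps Y)) + 0"
    if "m2 \<in> {mu_lo Ps Y..mu_up Ps Y}" for m2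
    using that integral_mem_mu_interval[OF X] integral_mem_mu_interval[OF Y]
    by (intro sublin_exp_centered_le) (auto intro!: mult_left_mono)
  then show "upper_cov Ps X Y \<le> sublin_exp Ps (\<lambda>w. (X w - mu_lo Ps X) * (Y w - mu_lo Ps Y))"
    using mu_endpoints_mem by (intro upper_cov_le) force
qed

lemma opposite_corners_le_upper_cov:
  "sublin_exp Ps (\<lambda>w. (X w - mu_lo Ps X) * (Y w - mu_up Ps Y)) \<le> upper_cov Ps X Y"
  "sublin_exp Ps (\<lambda>w. (X w - mu_up Ps X) * (Y w - mu_lo Ps Y)) \<le> upper_cov Ps X Y"
proof -
  have "sublin_exp Ps (\<lambda>w. (X w - mu_lo Ps X) * (Y w - mu_up Ps Y))
      \<le> sublin_exp Ps (\<lambda>w. (X w - m1) * (Y w - mu_up Ps Y)) + 0"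
    if "m1 \<in> {mu_lo Ps X..mu_up Ps X}" for m1
    using that integral_mem_mu_interval[OF X] integral_mem_mu_interval[OF Y]
    by (intro sublin_exp_centered_le) (auto intro!: mult_right_mono_neg)
  then show "sublin_exp Ps (\<lambda>w. (X w - mu_lo Ps X) * (Y w - mu_up Ps Y)) \<le> upper_cov Ps X Y"
    by (intro le_upper_cov[OF mu_endpoints_mem(4)]) simp
  have "sublin_exp Ps (\<lambda>w. (X w - mu_up Ps X) * (Y w - mu_lo Ps Y))
      \<le> sublin_exp Ps (\<lambda>w. (X w - m1) * (Y w - mu_lo Ps Y)) + 0"
    if "m1 \<in> {mu_lo Ps X..mu_up Ps X}" for m1
    using that integral_mem_mu_interval[OF X] integral_mem_mu_interval[OF Y]
    by (intro sublin_exp_centered_le) (auto intro!: mult_right_mono)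
  then show "sublin_exp Ps (\<lambda>w. (X w - mu_up Ps X) * (Y w - mu_lo Ps Y)) \<le> upper_cov Ps X Y"
    by (intro le_upper_cov[OF mu_endpoints_mem(3)]) simp
qed

lemma upper_cov_near_centered:
  assumes m1: "m1 \<in> {mu_lo Ps X..mu_up Ps X}" and m2: "m2 \<in> {mu_lo Ps Y..mu_up Ps Y}"
  shows "sublin_exp Ps (\<lambda>w. (X w - m1) * (Y w - m2))
           - (mu_up Ps X - mu_lo Ps X) * (mu_up Ps Y - mu_lo Ps Y) \<le> upper_cov Ps X Y"
    and "upper_cov Ps X Y \<le> sublin_exp Ps (\<lambda>w. (X w - m1) * (Y w - m2))
           + (mu_up Ps X - mu_lo Ps X) * (mu_up Ps Y - mu_lo Ps Y)"
proof -
  let ?d = "(mu_up Ps X - mu_lo Ps X) * (mu_up Ps Y - mu_lo Ps Y)"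
  show "sublin_exp Ps (\<lambda>w. (X w - m1) * (Y w - m2)) - ?d \<le> upper_cov Ps X Y"
  proof (rule le_upper_cov[OF m2])
    fix m1' assume "m1' \<in> {mu_lo Ps X..mu_up Ps X}"
    from sublin_exp_centered_oscillation[OF m1 this m2 m2]
    show "sublin_exp Ps (\<lambda>w. (X w - m1) * (Y w - m2)) - ?d
        \<le> sublin_exp Ps (\<lambda>w. (X w - m1') * (Y w - m2))" by simp
  qed
  show "upper_cov Ps X Y \<le> sublin_exp Ps (\<lambda>w. (X w - m1) * (Y w - m2)) + ?d"
  proof (rule upper_cov_le)
    fix m2' assume "m2' \<in> {mu_lo Ps Y..mu_up Ps Y}"
    from sublin_exp_centered_oscillation[OF m1 m1 this m2] m1
    show "\<exists>m1'\<in>{mu_lo Ps X..mu_up Ps X}.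
        sublin_exp Ps (\<lambda>w. (X w - m1') * (Y w - m2')) \<le> sublin_exp Ps (\<lambda>w. (X w - m1) * (Y w - m2)) + ?d"
      by blast
  qed
qed

lemma upper_cov_near_midpoint:
  defines "rX \<equiv> (mu_up Ps X + mu_lo Ps X) / 2" and "rY \<equiv> (mu_up Ps Y + mu_lo Ps Y) / 2"
  shows "sublin_exp Ps (\<lambda>w. (X w - rX) * (Y w - rY))
           - (mu_up Ps X - mu_lo Ps X) * (mu_up Ps Y - mu_lo Ps Y) / 4 \<le> upper_cov Ps X Y"
    and "upper_cov Ps X Y \<le> sublin_exp Ps (\<lambda>w. (X w - rX) * (Y w - rY))
           + (mu_up Ps X - mu_lo Ps X) * (mu_up Ps Y - mu_lo Ps Y) / 4"
proof -
  let ?q = "(mu_up Ps X - mu_lo Ps X) * (mu_up Ps Y - mu_lo Ps Y) / 4"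
  have rX: "rX \<in> {mu_lo Ps X..mu_up Ps X}" and rY: "rY \<in> {mu_lo Ps Y..mu_up Ps Y}"
    using mu_lo_le_mu_up[OF X] mu_lo_le_mu_up[OF Y] by (auto simp: rX_def rY_def)
  have quarter: "\<bar>(x - rX) * (y - rY)\<bar> \<le> ?q"
    if "x \<in> {mu_lo Ps X..mu_up Ps X}" "y \<in> {mu_lo Ps Y..mu_up Ps Y}" for x y
    using abs_mult_le_half_widths[OF abs_diff_midpoint_le[OF that(1)] abs_diff_midpoint_le[OF that(2)]]
    unfolding rX_def rY_def .
  show "sublin_exp Ps (\<lambda>w. (X w - rX) * (Y w - rY)) - ?q \<le> upper_cov Ps X Y"
  proof (rule le_upper_cov[OF rY])
    fix m1 assume m1: "m1 \<in> {mu_lo Ps X..mu_up Ps X}"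
    have "sublin_exp Ps (\<lambda>w. (X w - rX) * (Y w - rY)) \<le> sublin_exp Ps (\<lambda>w. (X w - m1) * (Y w - rY)) + ?q"
    proof (rule sublin_exp_centered_le)
      fix P assume P: "P \<in> Ps"
      have "(integral\<^sup>L P X - rX) * (integral\<^sup>L P Y - rY) - (integral\<^sup>L P X - m1) * (integral\<^sup>L P Y - rY)
          = (m1 - rX) * (integral\<^sup>L P Y - rY)"
        by (simp add: algebra_simps)
      with quarter[OF m1 integral_mem_mu_interval[OF Y P]]
      show "(integral\<^sup>L P X - rX) * (integral\<^sup>L P Y - rY) \<le> (integral\<^sup>L P X - m1) * (integral\<^sup>L P Y - rY) + ?q"
        by linarith
    qed
    then show "sublin_exp Ps (\<lambda>w. (X w - rX) * (Y w - rY)) - ?q \<le> sublin_exp Ps (\<lambda>w. (X w - m1) * (Y w - rY))"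
      by simp
  qed
  show "upper_cov Ps X Y \<le> sublin_exp Ps (\<lambda>w. (X w - rX) * (Y w - rY)) + ?q"
  proof (rule upper_cov_le)
    fix m2 assume m2: "m2 \<in> {mu_lo Ps Y..mu_up Ps Y}"
    have "sublin_exp Ps (\<lambda>w. (X w - rX) * (Y w - m2)) \<le> sublin_exp Ps (\<lambda>w. (X w - rX) * (Y w - rY)) + ?q"
    proof (rule sublin_exp_centered_le)
      fix P assume P: "P \<in> Ps"
      have "(integral\<^sup>L P X - rX) * (integral\<^sup>L P Y - m2) - (integral\<^sup>L P X - rX) * (integral\<^sup>L P Y - rY)
          = - ((integral\<^sup>L P X - rX) * (m2 - rY))"
        by (simp add: algebra_simps)
      with quarter[OF integral_mem_mu_interval[OF X P] m2]
      show "(integral\<^sup>L P X - rX) * (integral\<^sup>L P Y - m2) \<le> (integral\<^sup>L P X - rX) * (integral\<^sup>L P Y - rY) + ?q"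
        by linarith
    qed
    with rX show "\<exists>m1\<in>{mu_lo Ps X..mu_up Ps X}.
        sublin_exp Ps (\<lambda>w. (X w - m1) * (Y w - m2)) \<le> sublin_exp Ps (\<lambda>w. (X w - rX) * (Y w - rY)) + ?q"
      by blast
  qed
qed

lemma covariance_le_upper_cov:
  assumes P: "P \<in> Ps"
  shows "(\<integral>w. X w * Y w \<partial>P) - integral\<^sup>L P X * integral\<^sup>L P Y \<le> upper_cov Ps X Y"
proof (rule le_upper_cov[OF integral_mem_mu_interval[OF Y P]])
  fix m1
  show "(\<integral>w. X w * Y w \<partial>P) - integral\<^sup>L P X * integral\<^sup>L P Y
      \<le> sublin_exp Ps (\<lambda>w. (X w - m1) * (Y w - integral\<^sup>L P Y))"
    using integral_centered_le_sublin_exp[OF P, of m1 "integral\<^sup>L P Y"]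
    unfolding integral_centered_product_Ps[OF P] by simp
qed

lemma upper_cov_product_bounds:
  assumes bounds: "\<And>x y. x \<in> {mu_lo Ps X..mu_up Ps X} \<Longrightarrow> y \<in> {mu_lo Ps Y..mu_up Ps Y} \<Longrightarrow>
      lo \<le> x * y \<and> x * y \<le> hi"
  shows "upper_cov Ps X Y + lo \<le> sublin_exp Ps (\<lambda>w. X w * Y w)"
    and "sublin_exp Ps (\<lambda>w. X w * Y w) \<le> upper_cov Ps X Y + hi"
proof -
  have bdd: "bdd_above ((\<lambda>P. \<integral>w. X w * Y w \<partial>P) ` Ps)"
    using bdd_above_centered_product[of 0 0] by simp
  show "sublin_exp Ps (\<lambda>w. X w * Y w) \<le> upper_cov Ps X Y + hi"
    unfolding sublin_exp_def
  proof (rule cSUP_least[OF Ps_nonempty])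
    fix P assume P: "P \<in> Ps"
    have "integral\<^sup>L P X * integral\<^sup>L P Y \<le> hi"
      using bounds[OF integral_mem_mu_interval[OF X P] integral_mem_mu_interval[OF Y P]] by simp
    with covariance_le_upper_cov[OF P] show "(\<integral>w. X w * Y w \<partial>P) \<le> upper_cov Ps X Y + hi"
      by linarith
  qed
  have "upper_cov Ps X Y \<le> sublin_exp Ps (\<lambda>w. X w * Y w) + - lo"
  proof (rule upper_cov_le)
    fix m2 assume m2: "m2 \<in> {mu_lo Ps Y..mu_up Ps Y}"
    define m1 where "m1 = (if 0 \<le> m2 then mu_lo Ps X else mu_up Ps X)"
    have m1: "m1 \<in> {mu_lo Ps X..mu_up Ps X}" using mu_endpoints_mem by (simp add: m1_def)
    have "sublin_exp Ps (\<lambda>w. (X w - m1) * (Y w - m2)) \<le> sublin_exp Ps (\<lambda>w. X w * Y w) + - lo"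
    proof (rule sublin_exp_le_add[OF Ps_nonempty bdd])
      fix P assume P: "P \<in> Ps"
      let ?a = "integral\<^sup>L P X" and ?b = "integral\<^sup>L P Y"
      have "m2 * (m1 - ?a) \<le> 0"
        using integral_mem_mu_interval[OF X P]
        by (auto simp: m1_def intro: mult_nonneg_nonpos mult_nonpos_nonneg)
      moreover have "lo \<le> m1 * ?b"
        using bounds[OF m1 integral_mem_mu_interval[OF Y P]] by simp
      moreover have "(\<integral>w. (X w - m1) * (Y w - m2) \<partial>P) = (\<integral>w. X w * Y w \<partial>P) + m2 * (m1 - ?a) - m1 * ?b"
        unfolding integral_centered_product_Ps[OF P] by (simp add: algebra_simps)
      ultimately show "(\<integral>w. (X w - m1) * (Y w - m2) \<partial>P) \<le> (\<integral>w. X w * Y w \<partial>P) + - lo"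
        by linarith
    qed
    with m1 show "\<exists>m1\<in>{mu_lo Ps X..mu_up Ps X}.
        sublin_exp Ps (\<lambda>w. (X w - m1) * (Y w - m2)) \<le> sublin_exp Ps (\<lambda>w. X w * Y w) + - lo"
      by blast
  qed
  then show "upper_cov Ps X Y + lo \<le> sublin_exp Ps (\<lambda>w. X w * Y w)" by simp
qed

end

(* Reopened so that the results above can be applied to -X, via lower_cov_eq_neg_upper_cov. *)
context
  fixes X Y :: "'a \<Rightarrow> real"
  assumes X: "finite_second_moment X" and Y: "finite_second_moment Y"
begin

lemma lower_cov_le_corners:
  "lower_cov Ps X Y \<le> - sublin_exp Ps (\<lambda>w. - ((X w - mu_up Ps X) * (Y w - mu_up Ps Y)))"
  "lower_cov Ps X Y \<le> - sublin_exp Ps (\<lambda>w. - ((X w - mu_lo Ps X) * (Y w - mu_lo Ps Y)))"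
  using opposite_corners_le_upper_cov[OF finite_second_moment_uminus[OF X] Y]
  unfolding lower_cov_eq_neg_upper_cov mu_up_uminus mu_lo_uminus sublin_exp_uminus_centered
  by simp_all

lemma lower_cov_near_centered:
  assumes m1: "m1 \<in> {mu_lo Ps X..mu_up Ps X}" and m2: "m2 \<in> {mu_lo Ps Y..mu_up Ps Y}"
  shows "- sublin_exp Ps (\<lambda>w. - ((X w - m1) * (Y w - m2)))
           - (mu_up Ps X - mu_lo Ps X) * (mu_up Ps Y - mu_lo Ps Y) \<le> lower_cov Ps X Y"
    and "lower_cov Ps X Y \<le> - sublin_exp Ps (\<lambda>w. - ((X w - m1) * (Y w - m2)))
           + (mu_up Ps X - mu_lo Ps X) * (mu_up Ps Y - mu_lo Ps Y)"
  using m1 upper_cov_near_centered[OF finite_second_moment_uminus[OF X] Y, of "- m1" m2] m2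
  unfolding lower_cov_eq_neg_upper_cov mu_up_uminus mu_lo_uminus sublin_exp_uminus_centered
  by (simp_all add: algebra_simps)

lemma lower_cov_near_midpoint:
  defines "rX \<equiv> (mu_up Ps X + mu_lo Ps X) / 2" and "rY \<equiv> (mu_up Ps Y + mu_lo Ps Y) / 2"
  shows "- sublin_exp Ps (\<lambda>w. - ((X w - rX) * (Y w - rY)))
           - (mu_up Ps X - mu_lo Ps X) * (mu_up Ps Y - mu_lo Ps Y) / 4 \<le> lower_cov Ps X Y"
    and "lower_cov Ps X Y \<le> - sublin_exp Ps (\<lambda>w. - ((X w - rX) * (Y w - rY)))
           + (mu_up Ps X - mu_lo Ps X) * (mu_up Ps Y - mu_lo Ps Y) / 4"
proof -
  have rX': "(- mu_lo Ps X + - mu_up Ps X) / 2 = - rX" unfolding rX_def by argo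
  have dX': "- mu_lo Ps X - - mu_up Ps X = mu_up Ps X - mu_lo Ps X" by simp
  note upper = upper_cov_near_midpoint[OF finite_second_moment_uminus[OF X] Y,
      unfolded mu_up_uminus mu_lo_uminus rX' dX' sublin_exp_uminus_centered, folded rY_def]
  show "- sublin_exp Ps (\<lambda>w. - ((X w - rX) * (Y w - rY)))
           - (mu_up Ps X - mu_lo Ps X) * (mu_up Ps Y - mu_lo Ps Y) / 4 \<le> lower_cov Ps X Y"
    and "lower_cov Ps X Y \<le> - sublin_exp Ps (\<lambda>w. - ((X w - rX) * (Y w - rY)))
           + (mu_up Ps X - mu_lo Ps X) * (mu_up Ps Y - mu_lo Ps Y) / 4"
    using upper unfolding lower_cov_eq_neg_upper_cov by linarith+
qed

lemma lower_cov_le_covariance: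
  assumes "P \<in> Ps"
  shows "lower_cov Ps X Y \<le> (\<integral>w. X w * Y w \<partial>P) - integral\<^sup>L P X * integral\<^sup>L P Y"
  using covariance_le_upper_cov[OF finite_second_moment_uminus[OF X] Y assms]
  by (simp add: lower_cov_eq_neg_upper_cov)

lemma lower_cov_product_bounds:
  assumes bounds: "\<And>x y. x \<in> {mu_lo Ps X..mu_up Ps X} \<Longrightarrow> y \<in> {mu_lo Ps Y..mu_up Ps Y} \<Longrightarrow>
      lo \<le> x * y \<and> x * y \<le> hi"
  shows "lower_cov Ps X Y + lo \<le> - sublin_exp Ps (\<lambda>w. - (X w * Y w))"
    and "- sublin_exp Ps (\<lambda>w. - (X w * Y w)) \<le> lower_cov Ps X Y + hi"
proof -
  have "- hi \<le> x * y \<and> x * y \<le> - lo"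
    if "x \<in> {mu_lo Ps (\<lambda>w. - X w)..mu_up Ps (\<lambda>w. - X w)}" "y \<in> {mu_lo Ps Y..mu_up Ps Y}" for x y
    using bounds[of "- x" y] that by (simp add: mu_up_uminus mu_lo_uminus)
  from upper_cov_product_bounds[OF finite_second_moment_uminus[OF X] Y this]
  show "lower_cov Ps X Y + lo \<le> - sublin_exp Ps (\<lambda>w. - (X w * Y w))"
    and "- sublin_exp Ps (\<lambda>w. - (X w * Y w)) \<le> lower_cov Ps X Y + hi"
    by (simp_all add: lower_cov_eq_neg_upper_cov)
qed

lemma lower_cov_le_upper_cov: "lower_cov Ps X Y \<le> upper_cov Ps X Y"
proof -
  obtain P where "P \<in> Ps" using Ps_nonempty by blast
  from lower_cov_le_covariance[OF this] covariance_le_upper_cov[OF X Y this] show ?thesis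
    by linarith
qed

end

end

theorem proposition3p16:
  fixes M :: "'a measure" and Ps :: "'a measure set" and X Y :: "'a \<Rightarrow> real"
  assumes Ps_ne: "Ps \<noteq> {}"
    and Ps_prob: "\<And>P. P \<in> Ps \<Longrightarrow> prob_space P \<and> sets P = sets M"
    and X_meas: "X \<in> borel_measurable M"
    and Y_meas: "Y \<in> borel_measurable M"
    and fin: "(SUP P\<in>Ps. \<integral>\<^sup>+ w. ennreal ((X w)\<^sup>2) \<partial>P)
              + (SUP P\<in>Ps. \<integral>\<^sup>+ w. ennreal ((Y w)\<^sup>2) \<partial>P) < \<infinity>"
  defines "E \<equiv> sublin_exp Ps"
    and "uX \<equiv> mu_up Ps X" and "lX \<equiv> mu_lo Ps X"
    and "uY \<equiv> mu_up Ps Y" and "lY \<equiv> mu_lo Ps Y"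
    and "Cu \<equiv> upper_cov Ps X Y" and "Cl \<equiv> lower_cov Ps X Y"
    and "rX \<equiv> (mu_up Ps X + mu_lo Ps X) / 2" and "rY \<equiv> (mu_up Ps Y + mu_lo Ps Y) / 2"
    and "dX \<equiv> mu_up Ps X - mu_lo Ps X" and "dY \<equiv> mu_up Ps Y - mu_lo Ps Y"
  shows
    "(\<forall>m1 m2. (m1, m2) \<in> {(uX, uY), (lX, lY)} \<longrightarrow>
        Cu \<le> E (\<lambda>w. (X w - m1) * (Y w - m2))
      \<and> E (\<lambda>w. (X w - m1) * (Y w - m2)) \<le> Cu + dX * dY
      \<and> Cl \<le> - E (\<lambda>w. - ((X w - m1) * (Y w - m2)))
      \<and> - E (\<lambda>w. - ((X w - m1) * (Y w - m2))) \<le> Cl + dX * dY)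
   \<and> (\<forall>m1 m2. (m1, m2) \<in> {(lX, uY), (uX, lY)} \<longrightarrow>
        Cu - dX * dY \<le> E (\<lambda>w. (X w - m1) * (Y w - m2))
      \<and> E (\<lambda>w. (X w - m1) * (Y w - m2)) \<le> Cu + dX * dY
      \<and> Cl - dX * dY \<le> - E (\<lambda>w. - ((X w - m1) * (Y w - m2)))
      \<and> - E (\<lambda>w. - ((X w - m1) * (Y w - m2))) \<le> Cl + dX * dY)
   \<and> (let Mu = Max {lX * lY, uX * lY, lX * uY, uX * uY};
          Ml = Min {lX * lY, uX * lY, lX * uY, uX * uY}
      in Cu + Ml \<le> E (\<lambda>w. X w * Y w) \<and> E (\<lambda>w. X w * Y w) \<le> Cu + Mu
       \<and> Cl + Ml \<le> - E (\<lambda>w. - (X w * Y w)) \<and> - E (\<lambda>w. - (X w * Y w)) \<le> Cl + Mu)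
   \<and> (E (\<lambda>w. (X w - rX) * (Y w - rY)) - dX * dY / 4 \<le> Cu
      \<and> Cu \<le> E (\<lambda>w. (X w - rX) * (Y w - rY)) + dX * dY / 4
      \<and> - E (\<lambda>w. - ((X w - rX) * (Y w - rY))) - dX * dY / 4 \<le> Cl
      \<and> Cl \<le> - E (\<lambda>w. - ((X w - rX) * (Y w - rY))) + dX * dY / 4)
   \<and> (0 \<le> Cu - Cl
      \<and> Cu - Cl \<le> E (\<lambda>w. (X w - rX) * (Y w - rY))
                   + E (\<lambda>w. - ((X w - rX) * (Y w - rY))) + dX * dY / 2)"
proof -
  interpret sublinear_expectation_space M Ps
    using Ps_ne Ps_prob by (intro sublinear_expectation_space.intro) simp_all
  have X: "finite_second_moment X" and Y: "finite_second_moment Y"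
    using X_meas Y_meas fin by (simp_all add: finite_second_moment_def)
  note box = upper_cov_near_centered[OF X Y] lower_cov_near_centered[OF X Y]
  show ?thesis
    unfolding Let_def E_def uX_def lX_def uY_def lY_def Cu_def Cl_def rX_def rY_def dX_def dY_def
    using upper_cov_le_corners[OF X Y] lower_cov_le_corners[OF X Y]
      box[OF mu_endpoints_mem(1,3)[OF X Y]] box[OF mu_endpoints_mem(1,4)[OF X Y]]
      box[OF mu_endpoints_mem(2,3)[OF X Y]] box[OF mu_endpoints_mem(2,4)[OF X Y]]
      upper_cov_product_bounds[OF X Y mult_bounded_by_corners]
      lower_cov_product_bounds[OF X Y mult_bounded_by_corners]
      upper_cov_near_midpoint[OF X Y] lower_cov_near_midpoint[OF X Y] lower_cov_le_upper_cov[OF X Y]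
    by auto
qed

end
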